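(* Let $n\ge1$ and let $A_1,\ldots,A_n$ be operators on $\mathbb{C}^{2^n}$ such that $A_x^\dagger=A_x$ and $A_xA_y+A_yA_x=2\delta_{xy}\mathbb{1}$ for all $x,y\in\{1,\ldots,n\}$. Define the steering functional $F=\{F_x^a: x=1,\ldots,n,\ a=1,2\}$ by $F_x^1=\tfrac12A_x$, $F_x^2=-\tfrac12A_x$. Then $$V(F)\ \ge\ \sqrt{\tfrac{n}{2}}.$$
   Context: Here $d=2^n$. An $(n,2,d)$-assemblage is a family $\sigma=\{\sigma_x^a: x=1,\ldots,n,\ a=1,2\}$ of positive semidefinite operators on $\mathbb{C}^d$ such that $\sigma_x^1+\sigma_x^2$ does not depend on $x$ and has trace $1$; $\mathcal{Q}$ is the set of all such assemblages. An assemblage has a local hidden state (LHS) model if there exist a finite index set $\Lambda$, weights $q_\lambda\ge0$ with $\sum_\lambda q_\lambda=1$, density matrices $\sigma_\lambda$ on $\mathbb{C}^d$, and probability distributions $\{p_\lambda(a|x)\}_{a=1,2}$ for each $x,\lambda$, such that $\sigma_x^a=\sum_\lambda q_\lambda p_\lambda(a|x)\sigma_\lambda$ for all $x,a$; $\mathcal{L}$ is the set of such assemblages. For a steering functional $F=\{F_x^a\}$ (a family of $d\times d$ matrices), $\langle F,\sigma\rangle=\mathrm{Tr}\big(\sum_{x,a}F_x^a\sigma_x^a\big)$, $S_{LHS}(F)=\sup\{|\langle F,\sigma\rangle|:\sigma\in\mathcal{L}\}$, $S_Q(F)=\sup\{|\langle F,\sigma\rangle|:\sigma\in\mathcal{Q}\}$,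 and $V(F)=S_Q(F)/S_{LHS}(F)$. *)

theory Defs
  imports "HOL-Analysis.Analysis"
begin

text \<open>Operators on \<open>\<complex>^d\<close> are represented as \<open>complex^'d^'d\<close>, with \<open>d = CARD('d)\<close>.
  Settings indices \<open>x = 1..n\<close> are represented by a finite type \<open>'x\<close> with \<open>n = CARD('x)\<close>;
  outcome indices \<open>a\<close> are natural numbers in \<open>{1,2}\<close>.\<close>

definition cadj :: "complex^'d^'d \<Rightarrow> complex^'d^'d" where
  "cadj M = (\<chi> i j. cnj (M $ j $ i))"

definition psd :: "complex^'d^'d \<Rightarrow> bool" where
  "psd M \<longleftrightarrow> cadj M = M \<and>
     (\<forall>v :: complex^'d. 0 \<le> Re (\<Sum>i\<in>UNIV. cnj (v $ i) * (M *v v) $ i))"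

definition density :: "complex^'d^'d \<Rightarrow> bool" where
  "density \<rho> \<longleftrightarrow> psd \<rho> \<and> trace \<rho> = 1"

definition assemblage :: "('x::finite \<Rightarrow> nat \<Rightarrow> complex^'d^'d) \<Rightarrow> bool" where
  "assemblage \<sigma> \<longleftrightarrow>
     (\<forall>x. \<forall>a\<in>{1,2}. psd (\<sigma> x a)) \<and>
     (\<forall>x y. \<sigma> x 1 + \<sigma> x 2 = \<sigma> y 1 + \<sigma> y 2) \<and>
     (\<forall>x. trace (\<sigma> x 1 + \<sigma> x 2) = 1)"

text \<open>Assemblages with a local hidden state model: the set \<open>\<L>\<close>.
  The finite index set \<open>\<Lambda>\<close> is \<open>{..<m}\<close>.\<close>
definition lhs_model :: "('x::finite \<Rightarrow> nat \<Rightarrow> complex^'d^'d) \<Rightarrow> bool" where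
  "lhs_model \<sigma> \<longleftrightarrow>
     (\<exists>(m::nat) (q::nat \<Rightarrow> real) (\<rho>::nat \<Rightarrow> complex^'d^'d) (p::nat \<Rightarrow> 'x \<Rightarrow> nat \<Rightarrow> real).
        (\<forall>l<m. 0 \<le> q l) \<and> (\<Sum>l<m. q l) = 1 \<and>
        (\<forall>l<m. density (\<rho> l)) \<and>
        (\<forall>l<m. \<forall>x. 0 \<le> p l x 1 \<and> 0 \<le> p l x 2 \<and> p l x 1 + p l x 2 = 1) \<and>
        (\<forall>x. \<forall>a\<in>{1,2}. \<sigma> x a = (\<Sum>l<m. (q l * p l x a) *\<^sub>R \<rho> l)))"

definition pairing :: "('x::finite \<Rightarrow> nat \<Rightarrow> complex^'d^'d) \<Rightarrow> ('x \<Rightarrow> nat \<Rightarrow> complex^'d^'d) \<Rightarrow> complex" where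
  "pairing F \<sigma> = trace (\<Sum>x\<in>UNIV. \<Sum>a\<in>{1,2}. F x a ** \<sigma> x a)"

definition S_LHS :: "('x::finite \<Rightarrow> nat \<Rightarrow> complex^'d^'d) \<Rightarrow> real" where
  "S_LHS F = Sup {cmod (pairing F \<sigma>) | \<sigma>. lhs_model \<sigma>}"

definition S_Q :: "('x::finite \<Rightarrow> nat \<Rightarrow> complex^'d^'d) \<Rightarrow> real" where
  "S_Q F = Sup {cmod (pairing F \<sigma>) | \<sigma>. assemblage \<sigma>}"

definition violation :: "('x::finite \<Rightarrow> nat \<Rightarrow> complex^'d^'d) \<Rightarrow> real" where
  "violation F = S_Q F / S_LHS F"

end

theory Submission
  imports Defs
begin

(* For a Hermitian involution A the spectral projections P+- = (1 +- A)/2 give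
   |tr(A S)| <= tr S for every positive S. So each of the n terms of <F, sigma> has modulus
   at most 1/2 for any assemblage, and the assemblage P+-(A_x)/d attains n/2.
   For a hidden state rho, anticommutation makes (sum_x t_x A_x)/|t| a Hermitian involution,
   where t_x = tr(A_x rho); hence |t| <= 1 and, by Cauchy-Schwarz, sum_x |t_x| <= sqrt n.
   Averaging over hidden states gives S_LHS(F) <= sqrt n / 2, and an eigenstate of a single
   A_x shows S_LHS(F) >= 1/2 > 0. Therefore V(F) >= sqrt n >= sqrt (n/2). *)

lemma matrix_add_rdistrib: "((A::'a::semiring_1^'n^'m) + B) ** C = A ** C + B ** C"
  by (simp add: matrix_matrix_mult_def vec_eq_iff distrib_right sum.distrib)

lemma matrix_diff_ldistrib: "(C::'a::ring_1^'n^'m) ** (A - B) = C ** A - C ** B"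
  by (simp add: matrix_matrix_mult_def vec_eq_iff right_diff_distrib sum_subtractf)

lemma matrix_diff_rdistrib: "((A::'a::ring_1^'n^'m) - B) ** C = A ** C - B ** C"
  by (simp add: matrix_matrix_mult_def vec_eq_iff left_diff_distrib sum_subtractf)

lemma matrix_sum_ldistrib:
  "(B::'a::semiring_1^'n^'m) ** (\<Sum>l\<in>S. M l) = (\<Sum>l\<in>S. B ** M l)"
  by (induction S rule: infinite_finite_induct) (auto simp: matrix_add_ldistrib)

lemma matrix_sum_rdistrib:
  "(\<Sum>l\<in>S. M l) ** (B::'a::semiring_1^'n^'m) = (\<Sum>l\<in>S. M l ** B)"
  by (induction S rule: infinite_finite_induct) (auto simp: matrix_add_rdistrib)

lemma trace_zero [simp]: "trace 0 = 0"
  by (simp add: trace_def)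

lemma trace_sum: "trace (\<Sum>l\<in>S. M l :: 'a::comm_semiring_1^'n^'n) = (\<Sum>l\<in>S. trace (M l))"
  by (induction S rule: infinite_finite_induct) (auto simp: trace_add)

lemma trace_scaleR: "trace (c *\<^sub>R (M::'a::real_algebra_1^'n^'n)) = c *\<^sub>R trace M"
  by (simp add: trace_def scaleR_sum_right)

lemma add_self_eq_add_self_iff: "x + x = y + y \<longleftrightarrow> (x::'a::real_vector) = y"
  by (simp only: scaleR_2[symmetric] scaleR_cancel_left) simp

lemma mat_add: "mat (a + b) = (mat a + mat b :: 'a::semiring_1^'n^'n)"
  by (simp add: vec_eq_iff mat_def)

lemma cadj_add: "cadj (M + N) = cadj M + cadj N"
  by (simp add: cadj_def vec_eq_iff)

lemma cadj_scaleR: "cadj (c *\<^sub>R M) = c *\<^sub>R cadj M"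
  by (simp add: cadj_def vec_eq_iff)

lemma cadj_mat_of_real: "cadj (mat (of_real r)) = mat (of_real r)"
  by (simp add: cadj_def vec_eq_iff mat_def)

lemma cadj_sum: "cadj (\<Sum>l\<in>S. M l) = (\<Sum>l\<in>S. cadj (M l))"
  by (induction S rule: infinite_finite_induct) (auto simp: cadj_add cadj_def vec_eq_iff)

lemma cnj_entry_hermitian:
  assumes "cadj M = M"
  shows "cnj (M $ i $ j) = M $ j $ i"
proof -
  have "M $ j $ i = cadj M $ j $ i"
    using assms by simp
  then show ?thesis
    by (simp add: cadj_def)
qed

definition quad_form :: "complex^'d^'d \<Rightarrow> complex^'d \<Rightarrow> complex" where
  "quad_form M v = (\<Sum>i\<in>UNIV. cnj (v $ i) * (M *v v) $ i)"

lemma psd_iff_quad_form: "psd M \<longleftrightarrow> cadj M = M \<and> (\<forall>v. 0 \<le> Re (quad_form M v))"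
  by (simp add: psd_def quad_form_def)

lemma quad_form_hermitian_real:
  assumes "cadj M = M"
  shows "Im (quad_form M v) = 0"
proof -
  have "cnj (quad_form M v) = (\<Sum>i\<in>UNIV. \<Sum>j\<in>UNIV. v$i * M$j$i * cnj (v$j))"
    unfolding quad_form_def matrix_vector_mult_def
    by (simp add: sum_distrib_left cnj_entry_hermitian[OF assms] mult_ac)
  also have "\<dots> = (\<Sum>j\<in>UNIV. \<Sum>i\<in>UNIV. v$i * M$j$i * cnj (v$j))"
    by (rule sum.swap)
  also have "\<dots> = quad_form M v"
    unfolding quad_form_def matrix_vector_mult_def by (simp add: sum_distrib_left mult_ac)
  finally have "Im (cnj (quad_form M v)) = Im (quad_form M v)"
    by simp
  then show ?thesis
    by simp
qed

lemma trace_hermitian_sandwich: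
  assumes "cadj P = P"
  shows "trace (P ** S ** P) = (\<Sum>i\<in>UNIV. quad_form S (column i P))"
proof -
  have "trace (P ** S ** P) = (\<Sum>i\<in>UNIV. \<Sum>k\<in>UNIV. \<Sum>j\<in>UNIV. P$i$j * S$j$k * P$k$i)"
    by (simp add: trace_def matrix_matrix_mult_def sum_distrib_right)
  also have "\<dots> = (\<Sum>i\<in>UNIV. \<Sum>j\<in>UNIV. \<Sum>k\<in>UNIV. P$i$j * S$j$k * P$k$i)"
    by (rule sum.cong[OF refl], rule sum.swap)
  also have "\<dots> = (\<Sum>i\<in>UNIV. quad_form S (column i P))"
    unfolding quad_form_def matrix_vector_mult_def column_def
    by (simp add: sum_distrib_left cnj_entry_hermitian[OF assms] mult_ac)
  finally show ?thesis .
qed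

text \<open>Idempotence lets us replace \<open>R S\<close> by \<open>R S R\<close> under the trace, a sum of values of the
  quadratic form of \<open>S\<close>.\<close>
lemma trace_projection_psd:
  assumes "cadj R = R" "R ** R = R" "psd S"
  shows "Im (trace (R ** S)) = 0" "0 \<le> Re (trace (R ** S))"
proof -
  have "trace (R ** S) = trace (R ** (R ** S))"
    using assms(2) by (simp add: matrix_mul_assoc)
  also have "\<dots> = trace (R ** S ** R)" by (rule trace_mul_sym)
  finally have tr: "trace (R ** S) = (\<Sum>i\<in>UNIV. quad_form S (column i R))"
    using trace_hermitian_sandwich[OF assms(1)] by simp
  have "cadj S = S" "\<forall>v. 0 \<le> Re (quad_form S v)"
    using assms(3) by (auto simp: psd_iff_quad_form)
  then show "Im (trace (R ** S)) = 0" "0 \<le> Re (trace (R ** S))"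
    unfolding tr by (simp_all add: quad_form_hermitian_real Re_sum sum_nonneg)
qed

lemma trace_psd:
  assumes "psd S"
  shows "Im (trace S) = 0" "0 \<le> Re (trace S)"
  using trace_projection_psd[of "mat 1", OF _ _ assms] cadj_mat_of_real[of 1] by simp_all

lemma psd_hermitian_idempotent:
  fixes R :: "complex^'d^'d"
  assumes herm: "cadj R = R" and idem: "R ** R = R"
  shows "psd R"
  unfolding psd_iff_quad_form
proof (intro conjI allI herm)
  fix v :: "complex^'d"
  define w where "w = R *v v"
  have "R *v v = R *v w"
    unfolding w_def by (simp add: matrix_vector_mul_assoc idem)
  then have "quad_form R v = (\<Sum>i\<in>UNIV. \<Sum>j\<in>UNIV. cnj (v $ i) * R$i$j * w$j)"
    unfolding quad_form_def by (simp add: matrix_vector_mult_def sum_distrib_left mult_ac)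
  also have "\<dots> = (\<Sum>j\<in>UNIV. \<Sum>i\<in>UNIV. cnj (v $ i) * R$i$j * w$j)" by (rule sum.swap)
  also have "\<dots> = (\<Sum>j\<in>UNIV. cnj (w $ j) * w $ j)"
  proof -
    have "cnj (w $ j) = (\<Sum>i\<in>UNIV. cnj (v $ i) * R$i$j)" for j
      unfolding w_def matrix_vector_mult_def by (simp add: cnj_entry_hermitian[OF herm] mult.commute)
    then show ?thesis by (simp add: sum_distrib_right)
  qed
  finally show "0 \<le> Re (quad_form R v)"
    by (simp add: Re_sum sum_nonneg)
qed

lemma quad_form_scaleR: "quad_form (c *\<^sub>R M) v = c *\<^sub>R quad_form M v"
proof -
  have "((c *\<^sub>R M) *v v) $ i = c *\<^sub>R (M *v v) $ i" for i
    by (simp add: matrix_vector_mult_def scaleR_sum_right)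
  then show ?thesis
    by (simp add: quad_form_def scaleR_sum_right)
qed

lemma psd_scaleR: "psd M \<Longrightarrow> 0 \<le> c \<Longrightarrow> psd (c *\<^sub>R M)"
  by (simp add: psd_iff_quad_form cadj_scaleR quad_form_scaleR)

definition eigenproj :: "complex^'n^'n \<Rightarrow> real \<Rightarrow> complex^'n^'n" where
  "eigenproj A s = (1/2::real) *\<^sub>R (mat 1 + s *\<^sub>R A)"

lemma eigenproj_add: "eigenproj A 1 + eigenproj A (-1) = mat 1"
  by (simp add: eigenproj_def vec_eq_iff mat_def) (simp add: scaleR_conv_of_real algebra_simps)

lemma eigenproj_diff: "eigenproj A 1 - eigenproj A (-1) = A"
  by (simp add: eigenproj_def vec_eq_iff mat_def) (simp add: scaleR_conv_of_real algebra_simps)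

lemma hermitian_eigenproj: "cadj A = A \<Longrightarrow> cadj (eigenproj A s) = eigenproj A s"
  using cadj_mat_of_real[of 1] by (simp add: eigenproj_def cadj_add cadj_scaleR)

lemma involution_mult_eigenproj:
  assumes "A ** A = mat 1" "s * s = 1"
  shows "A ** eigenproj A s = s *\<^sub>R eigenproj A s"
  using assms by (simp add: eigenproj_def matrix_add_ldistrib matrix_scalar_ac
      scalar_matrix_assoc[symmetric] algebra_simps)

lemma eigenproj_idempotent:
  assumes "A ** A = mat 1" "s * s = 1"
  shows "eigenproj A s ** eigenproj A s = eigenproj A s"
proof -
  have "eigenproj A s ** eigenproj A s
      = (1/2::real) *\<^sub>R (eigenproj A s + s *\<^sub>R (A ** eigenproj A s))"
    by (simp add: eigenproj_def matrix_add_rdistrib scalar_matrix_assoc[symmetric])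
  also have "\<dots> = eigenproj A s"
    using assms by (simp add: involution_mult_eigenproj scaleR_add_right[symmetric])
  finally show ?thesis .
qed

lemma psd_eigenproj:
  "cadj A = A \<Longrightarrow> A ** A = mat 1 \<Longrightarrow> s * s = 1 \<Longrightarrow> psd (eigenproj A s)"
  by (simp add: psd_hermitian_idempotent hermitian_eigenproj eigenproj_idempotent)

text \<open>Writing \<open>A = P\<^sub>+ - P\<^sub>-\<close> and \<open>1 = P\<^sub>+ + P\<^sub>-\<close> with the spectral projections
  \<open>P\<^sub>\<plusminus>\<close>, both traces against \<open>S\<close> are real and \<open>\<bar>tr(P\<^sub>+S) - tr(P\<^sub>-S)\<bar> \<le> tr(P\<^sub>+S) + tr(P\<^sub>-S)\<close>.\<close>
lemma trace_involution_psd: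
  assumes "cadj A = A" "A ** A = mat 1" "psd S"
  shows "Im (trace (A ** S)) = 0" "cmod (trace (A ** S)) \<le> Re (trace S)"
proof -
  let ?tp = "trace (eigenproj A 1 ** S)" and ?tm = "trace (eigenproj A (-1) ** S)"
  have tp: "Im ?tp = 0" "0 \<le> Re ?tp" and tm: "Im ?tm = 0" "0 \<le> Re ?tm"
    using trace_projection_psd[OF hermitian_eigenproj eigenproj_idempotent assms(3)] assms(1,2)
    by simp_all
  have "trace S = ?tp + ?tm"
    using eigenproj_add[of A] by (metis matrix_add_rdistrib matrix_mul_lid trace_add)
  moreover have "trace (A ** S) = ?tp - ?tm"
    using eigenproj_diff[of A] by (metis matrix_diff_rdistrib trace_sub)
  ultimately show "Im (trace (A ** S)) = 0" "cmod (trace (A ** S)) \<le> Re (trace S)"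
    using tp tm by (simp_all add: cmod_eq_Re)
qed

lemma anticommuting_combination_square:
  fixes A :: "'x::finite \<Rightarrow> complex^'d^'d"
  assumes anticomm: "\<And>x y. A x ** A y + A y ** A x = (if x = y then mat 2 else mat 0)"
  shows "(\<Sum>x\<in>UNIV. c x *\<^sub>R A x) ** (\<Sum>x\<in>UNIV. c x *\<^sub>R A x) = (\<Sum>x\<in>UNIV. (c x)\<^sup>2) *\<^sub>R mat 1"
    (is "?B ** ?B = ?r *\<^sub>R mat 1")
proof -
  define G where "G x y = (c x * c y) *\<^sub>R (A x ** A y)" for x y
  have BB: "?B ** ?B = (\<Sum>x\<in>UNIV. \<Sum>y\<in>UNIV. G y x)"
    unfolding G_def
    by (simp add: matrix_sum_ldistrib matrix_sum_rdistrib matrix_scalar_ac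
        scalar_matrix_assoc[symmetric] scaleR_sum_right mult.commute)
  have G_sym: "G x y + G y x = (if x = y then (c x * c x) *\<^sub>R mat 2 else 0)" for x y
  proof -
    have "G x y + G y x = (c x * c y) *\<^sub>R (A x ** A y + A y ** A x)"
      by (simp add: G_def scaleR_add_right mult.commute)
    then show ?thesis
      by (simp only: anticomm) simp
  qed
  have "?B ** ?B + ?B ** ?B = (\<Sum>x\<in>UNIV. \<Sum>y\<in>UNIV. G x y + G y x)"
    unfolding BB sum.distrib by (subst (1) sum.swap) (rule refl)
  also have "\<dots> = (\<Sum>x\<in>UNIV. (c x * c x) *\<^sub>R mat 2)"
    by (simp add: G_sym)
  also have "\<dots> = ?r *\<^sub>R mat 1 + ?r *\<^sub>R mat 1"
    by (simp add: scaleR_sum_left[symmetric] power2_eq_square mat_add[of 1 1, simplified]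
        scaleR_add_right)
  finally show ?thesis
    unfolding add_self_eq_add_self_iff .
qed

lemma anticommuting_involution:
  fixes A :: "'x::finite \<Rightarrow> complex^'d^'d"
  assumes "\<And>x y. A x ** A y + A y ** A x = (if x = y then mat 2 else mat 0)"
  shows "A x ** A x = mat 1"
proof -
  have "A x ** A x + A x ** A x = mat 1 + mat 1"
    using assms[of x x] mat_add[of "1::complex" 1] by (simp only: simp_thms if_True one_add_one)
  then show ?thesis
    unfolding add_self_eq_add_self_iff .
qed

text \<open>If the expectation vector \<open>t\<close> is nonzero, the observable \<open>\<Sum>\<^sub>x t\<^sub>x A\<^sub>x / \<bar>t\<bar>\<close> is a
  Hermitian involution whose expectation is \<open>\<bar>t\<bar>\<close>, hence at most 1.\<close>
lemma L2_set_anticommuting_expectations_le_1: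
  fixes A :: "'x::finite \<Rightarrow> complex^'d^'d"
  assumes herm: "\<And>x. cadj (A x) = A x"
    and anticomm: "\<And>x y. A x ** A y + A y ** A x = (if x = y then mat 2 else mat 0)"
    and dens: "density \<rho>"
  shows "L2_set (\<lambda>x. Re (trace (A x ** \<rho>))) UNIV \<le> 1"
proof -
  define t where "t x = Re (trace (A x ** \<rho>))" for x
  define N where "N = L2_set t UNIV"
  have psd: "psd \<rho>" and tr: "trace \<rho> = 1"
    using dens by (auto simp: density_def)
  show ?thesis
  proof (cases "N = 0")
    case False
    then have N_pos: "N > 0"
      using L2_set_nonneg[of t UNIV] N_def by linarith
    define B where "B = (\<Sum>x\<in>UNIV. (t x / N) *\<^sub>R A x)"
    have "(\<Sum>x\<in>UNIV. (t x / N)\<^sup>2) = N\<^sup>2 / N\<^sup>2"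
      by (simp add: N_def L2_set_def power_divide sum_divide_distrib[symmetric] sum_nonneg)
    then have B_inv: "B ** B = mat 1"
      using N_pos by (simp add: B_def anticommuting_combination_square[OF anticomm])
    have B_herm: "cadj B = B"
      by (simp add: B_def cadj_sum cadj_scaleR herm)
    have "Re (trace (B ** \<rho>)) = (\<Sum>x\<in>UNIV. t x * t x) / N"
      by (simp add: B_def t_def matrix_sum_rdistrib trace_sum trace_scaleR
          scalar_matrix_assoc[symmetric] sum_divide_distrib)
    also have "\<dots> = N"
      by (simp add: N_def L2_set_def power2_eq_square[symmetric] sum_nonneg real_div_sqrt)
    finally have "N = Re (trace (B ** \<rho>))" ..
    also have "\<dots> \<le> cmod (trace (B ** \<rho>))"
      by (rule complex_Re_le_cmod)
    also have "\<dots> \<le> 1"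
      using trace_involution_psd(2)[OF B_herm B_inv psd] tr by simp
    finally show ?thesis
      unfolding N_def t_def .
  qed (simp add: N_def t_def[abs_def])
qed

lemma sum_anticommuting_expectations_le_sqrt:
  fixes A :: "'x::finite \<Rightarrow> complex^'d^'d"
  assumes herm: "\<And>x. cadj (A x) = A x"
    and anticomm: "\<And>x y. A x ** A y + A y ** A x = (if x = y then mat 2 else mat 0)"
    and dens: "density \<rho>"
  shows "(\<Sum>x\<in>UNIV. cmod (trace (A x ** \<rho>))) \<le> sqrt (real CARD('x))"
proof -
  have real: "cmod (trace (A x ** \<rho>)) = \<bar>Re (trace (A x ** \<rho>))\<bar>" for x
    using trace_involution_psd(1)[OF herm anticommuting_involution[OF anticomm]] dens
    by (simp add: density_def cmod_eq_Re)
  have "(\<Sum>x\<in>UNIV. \<bar>Re (trace (A x ** \<rho>))\<bar> * \<bar>1\<bar>)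
      \<le> L2_set (\<lambda>x. Re (trace (A x ** \<rho>))) UNIV * L2_set (\<lambda>_::'x. 1::real) UNIV"
    by (rule L2_set_mult_ineq)
  also have "\<dots> \<le> sqrt (real CARD('x))"
    using L2_set_anticommuting_expectations_le_1[OF herm anticomm dens]
    by (simp add: L2_set_constant mult_left_le_one_le)
  finally show ?thesis
    by (simp add: real)
qed

lemma pairing_eq_sum_trace_diff:
  assumes F1: "\<And>x. F x 1 = (1/2::real) *\<^sub>R A x"
    and F2: "\<And>x. F x 2 = - ((1/2::real) *\<^sub>R A x)"
  shows "pairing F \<sigma> = (\<Sum>x\<in>UNIV. (1/2::real) *\<^sub>R trace (A x ** (\<sigma> x 1 - \<sigma> x 2)))"
proof -
  have "(\<Sum>a\<in>{1,2}. F x a ** \<sigma> x a) = (1/2::real) *\<^sub>R (A x ** (\<sigma> x 1 - \<sigma> x 2))" for x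
    using F1[of x] F2[of x]
    by (simp add: scaleR_minus_left[symmetric] scalar_matrix_assoc[symmetric]
        matrix_diff_ldistrib scaleR_diff_right del: scaleR_minus_left)
  then show ?thesis
    by (simp add: pairing_def trace_sum trace_scaleR)
qed

lemma cmod_pairing_assemblage_le:
  fixes A :: "'x::finite \<Rightarrow> complex^'d^'d"
  assumes herm: "\<And>x. cadj (A x) = A x" and invol: "\<And>x. A x ** A x = mat 1"
    and F1: "\<And>x. F x 1 = (1/2::real) *\<^sub>R A x"
    and F2: "\<And>x. F x 2 = - ((1/2::real) *\<^sub>R A x)"
    and "assemblage \<sigma>"
  shows "cmod (pairing F \<sigma>) \<le> real CARD('x) / 2"
proof -
  have psd: "psd (\<sigma> x 1)" "psd (\<sigma> x 2)" and tr: "trace (\<sigma> x 1) + trace (\<sigma> x 2) = 1" for x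
    using \<open>assemblage \<sigma>\<close> by (auto simp: assemblage_def trace_add)
  have "cmod (trace (A x ** (\<sigma> x 1 - \<sigma> x 2))) \<le> 1" for x
  proof -
    have "cmod (trace (A x ** (\<sigma> x 1 - \<sigma> x 2)))
        \<le> cmod (trace (A x ** \<sigma> x 1)) + cmod (trace (A x ** \<sigma> x 2))"
      by (simp add: matrix_diff_ldistrib trace_sub norm_triangle_ineq4)
    also have "\<dots> \<le> Re (trace (\<sigma> x 1)) + Re (trace (\<sigma> x 2))"
      using trace_involution_psd(2)[OF herm invol psd(1)] trace_involution_psd(2)[OF herm invol psd(2)]
      by (rule add_mono)
    also have "\<dots> = 1"
      using arg_cong[OF tr[of x], of Re] by simp
    finally show ?thesis .
  qed
  then have "cmod (pairing F \<sigma>) \<le> (\<Sum>x::'x\<in>UNIV. 1/2)"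
    unfolding pairing_eq_sum_trace_diff[OF F1 F2]
    by (intro order.trans[OF norm_sum] sum_mono) simp
  then show ?thesis
    by simp
qed

lemma cmod_pairing_lhs_model_le:
  fixes A :: "'x::finite \<Rightarrow> complex^'d^'d"
  assumes herm: "\<And>x. cadj (A x) = A x"
    and anticomm: "\<And>x y. A x ** A y + A y ** A x = (if x = y then mat 2 else mat 0)"
    and F1: "\<And>x. F x 1 = (1/2::real) *\<^sub>R A x"
    and F2: "\<And>x. F x 2 = - ((1/2::real) *\<^sub>R A x)"
    and "lhs_model \<sigma>"
  shows "cmod (pairing F \<sigma>) \<le> sqrt (real CARD('x)) / 2"
proof -
  obtain m :: nat and q \<rho> p where q_nonneg: "\<forall>l<m. 0 \<le> q l" and q_sum: "(\<Sum>l<m. q l) = 1"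
    and dens: "\<forall>l<m. density (\<rho> l)"
    and p_prob: "\<forall>l<m. \<forall>x. 0 \<le> p l x 1 \<and> 0 \<le> p l x 2 \<and> p l x 1 + p l x 2 = 1"
    and \<sigma>_eq: "\<forall>x. \<forall>a\<in>{1,2}. \<sigma> x a = (\<Sum>l<m. (q l * p l x a) *\<^sub>R \<rho> l)"
    using \<open>lhs_model \<sigma>\<close> unfolding lhs_model_def by blast
  define T where "T x l = cmod (trace (A x ** \<rho> l))" for x l
  have "trace (A x ** (\<sigma> x 1 - \<sigma> x 2))
      = (\<Sum>l<m. (q l * (p l x 1 - p l x 2)) *\<^sub>R trace (A x ** \<rho> l))" for x
    using \<sigma>_eq
    by (simp add: matrix_diff_ldistrib matrix_sum_ldistrib trace_sub trace_sum trace_scaleR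
        matrix_scalar_ac scalar_matrix_assoc[symmetric] sum_subtractf[symmetric]
        right_diff_distrib scaleR_diff_left)
  then have row: "cmod (trace (A x ** (\<sigma> x 1 - \<sigma> x 2))) \<le> (\<Sum>l<m. q l * T x l)" for x
  proof (simp only:, intro order.trans[OF norm_sum] sum_mono)
    fix l assume "l \<in> {..<m}"
    then have l: "l < m"
      by simp
    have "\<bar>p l x 1 - p l x 2\<bar> \<le> 1"
      using p_prob[rule_format, OF l, of x] by (simp add: abs_le_iff)
    then have "\<bar>q l * (p l x 1 - p l x 2)\<bar> \<le> q l"
      using q_nonneg l by (simp add: abs_mult mult_left_le)
    then show "cmod ((q l * (p l x 1 - p l x 2)) *\<^sub>R trace (A x ** \<rho> l)) \<le> q l * T x l"
      by (simp add: T_def mult_right_mono)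
  qed
  have col: "(\<Sum>x\<in>UNIV. T x l) \<le> sqrt (real CARD('x))" if "l < m" for l
    unfolding T_def using sum_anticommuting_expectations_le_sqrt[OF herm anticomm] dens that by blast
  have "cmod ((1/2::real) *\<^sub>R trace (A x ** (\<sigma> x 1 - \<sigma> x 2))) \<le> 1/2 * (\<Sum>l<m. q l * T x l)"
    for x
    using row[of x] by simp
  then have "cmod (pairing F \<sigma>) \<le> (\<Sum>x\<in>UNIV. 1/2 * (\<Sum>l<m. q l * T x l))"
    unfolding pairing_eq_sum_trace_diff[OF F1 F2] by (intro order.trans[OF norm_sum] sum_mono)
  also have "\<dots> = 1/2 * (\<Sum>l<m. q l * (\<Sum>x\<in>UNIV. T x l))"
    by (simp add: sum_distrib_left) (rule sum.swap)
  also have "\<dots> \<le> 1/2 * (\<Sum>l<m. q l * sqrt (real CARD('x)))"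
    using q_nonneg col by (intro mult_left_mono sum_mono) auto
  also have "\<dots> = sqrt (real CARD('x)) / 2"
    by (simp add: sum_distrib_right[symmetric] q_sum)
  finally show ?thesis .
qed

text \<open>Bob's assemblage when Alice measures the projections \<open>P\<^sup>\<plusminus>(A\<^sub>x)\<close> on a maximally
  entangled state: \<open>\<sigma>\<^sub>x\<^sup>a = P\<^sup>\<plusminus>(A\<^sub>x) / d\<close>, with outcome 1 for \<open>+\<close> and 2 for \<open>-\<close>.\<close>
definition entangled_assemblage :: "('x \<Rightarrow> complex^'d^'d) \<Rightarrow> 'x \<Rightarrow> nat \<Rightarrow> complex^'d^'d" where
  "entangled_assemblage A x a = (1 / real CARD('d)) *\<^sub>R eigenproj (A x) (if a = 1 then 1 else -1)"

lemma entangled_assemblage_add: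
  fixes A :: "'x \<Rightarrow> complex^'d^'d"
  shows "entangled_assemblage A x 1 + entangled_assemblage A x 2 = (1 / real CARD('d)) *\<^sub>R mat 1"
  by (simp add: entangled_assemblage_def scaleR_add_right[symmetric] eigenproj_add)

lemma entangled_assemblage_diff:
  fixes A :: "'x \<Rightarrow> complex^'d^'d"
  shows "entangled_assemblage A x 1 - entangled_assemblage A x 2 = (1 / real CARD('d)) *\<^sub>R A x"
  by (simp add: entangled_assemblage_def scaleR_diff_right[symmetric] eigenproj_diff)

lemma assemblage_entangled_assemblage:
  fixes A :: "'x::finite \<Rightarrow> complex^'d^'d"
  assumes herm: "\<And>x. cadj (A x) = A x" and invol: "\<And>x. A x ** A x = mat 1"
  shows "assemblage (entangled_assemblage A)"
  unfolding assemblage_def entangled_assemblage_add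
proof (intro conjI allI ballI refl)
  show "psd (entangled_assemblage A x a)" for x a
    by (simp add: entangled_assemblage_def psd_scaleR psd_eigenproj herm invol)
  show "trace ((1 / real CARD('d)) *\<^sub>R mat 1 :: complex^'d^'d) = 1"
    by (simp only: trace_scaleR trace_I) (simp add: scaleR_conv_of_real)
qed

lemma pairing_entangled_assemblage:
  fixes A :: "'x::finite \<Rightarrow> complex^'d^'d"
  assumes invol: "\<And>x. A x ** A x = mat 1"
    and F1: "\<And>x. F x 1 = (1/2::real) *\<^sub>R A x"
    and F2: "\<And>x. F x 2 = - ((1/2::real) *\<^sub>R A x)"
  shows "pairing F (entangled_assemblage A) = of_real (real CARD('x) / 2)"
proof -
  have "trace (A x ** ((1 / real CARD('d)) *\<^sub>R A x)) = 1" for x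
    by (simp add: matrix_scalar_ac scalar_matrix_assoc[symmetric] invol trace_scaleR trace_I)
      (simp add: scaleR_conv_of_real)
  then show ?thesis
    unfolding pairing_eq_sum_trace_diff[OF F1 F2] entangled_assemblage_diff
    by (simp add: scaleR_conv_of_real)
qed

lemma density_normalize:
  assumes psd: "psd P" and pos: "0 < Re (trace P)"
  shows "density ((1 / Re (trace P)) *\<^sub>R P)"
proof -
  have "trace P = of_real (Re (trace P))"
    using trace_psd(1)[OF psd] by (simp add: complex_eq_iff)
  then have "trace ((1 / Re (trace P)) *\<^sub>R P) = (1 / Re (trace P)) *\<^sub>R of_real (Re (trace P))"
    by (simp only: trace_scaleR)
  also have "\<dots> = 1"
    using pos by (simp add: scaleR_conv_of_real)
  finally show ?thesis
    using psd pos by (simp add: density_def psd_scaleR)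
qed

lemma density_with_unit_expectation:
  fixes A :: "complex^'d^'d"
  assumes herm: "cadj A = A" and invol: "A ** A = mat 1"
  obtains \<rho> where "density \<rho>" "cmod (trace (A ** \<rho>)) = 1"
proof -
  have "Re (trace (eigenproj A 1)) + Re (trace (eigenproj A (-1))) = real CARD('d)"
    using arg_cong[OF eigenproj_add[of A], of "\<lambda>M. Re (trace M)"] by (simp add: trace_add trace_I)
  moreover have "0 \<le> Re (trace (eigenproj A (-1)))" "0 < real CARD('d)"
    using trace_psd(2)[OF psd_eigenproj[OF herm invol, of "-1"]] by (simp_all add: finite_UNIV_card_ge_0)
  ultimately have "0 < Re (trace (eigenproj A 1)) \<or> 0 < Re (trace (eigenproj A (-1)))"
    by linarith
  then obtain s :: real where s: "s = 1 \<or> s = -1" and pos: "0 < Re (trace (eigenproj A s))"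
    by blast
  have ss: "s * s = 1"
    using s by auto
  define \<rho> where "\<rho> = (1 / Re (trace (eigenproj A s))) *\<^sub>R eigenproj A s"
  have dens: "density \<rho>"
    unfolding \<rho>_def by (rule density_normalize[OF psd_eigenproj[OF herm invol ss] pos])
  have "A ** \<rho> = s *\<^sub>R \<rho>"
    unfolding \<rho>_def
    by (simp only: matrix_scalar_ac scalar_matrix_assoc[symmetric] involution_mult_eigenproj[OF invol ss]
        scaleR_scaleR mult.commute)
  then have "trace (A ** \<rho>) = s *\<^sub>R 1"
    using dens by (simp only: trace_scaleR density_def)
  then have "cmod (trace (A ** \<rho>)) = 1"
    using s by auto
  with dens show ?thesis
    by (rule that)
qed

lemma lhs_model_single_state:
  assumes "density \<rho>" and "\<And>x. 0 \<le> p x 1 \<and> 0 \<le> p x 2 \<and> p x 1 + p x 2 = 1"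
  shows "lhs_model (\<lambda>x a. p x a *\<^sub>R \<rho>)"
  unfolding lhs_model_def
  by (rule exI[of _ 1], rule exI[of _ "\<lambda>_. 1"], rule exI[of _ "\<lambda>_. \<rho>"], rule exI[of _ "\<lambda>_. p"])
    (use assms in simp)

lemma S_Q_ge:
  fixes A :: "'x::finite \<Rightarrow> complex^'d^'d" and F :: "'x \<Rightarrow> nat \<Rightarrow> complex^'d^'d"
  assumes herm: "\<And>x. cadj (A x) = A x" and invol: "\<And>x. A x ** A x = mat 1"
    and F1: "\<And>x. F x 1 = (1/2::real) *\<^sub>R A x"
    and F2: "\<And>x. F x 2 = - ((1/2::real) *\<^sub>R A x)"
  shows "real CARD('x) / 2 \<le> S_Q F"
  unfolding S_Q_def
proof (rule cSup_upper2)
  show "cmod (pairing F (entangled_assemblage A)) \<in> {cmod (pairing F \<sigma>) |\<sigma>. assemblage \<sigma>}"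
    using assemblage_entangled_assemblage[where A = A, OF herm invol] by blast
  show "real CARD('x) / 2 \<le> cmod (pairing F (entangled_assemblage A))"
    by (simp add: pairing_entangled_assemblage[where A = A, OF invol F1 F2])
  show "bdd_above {cmod (pairing F \<sigma>) |\<sigma>. assemblage \<sigma>}"
    using cmod_pairing_assemblage_le[where A = A and F = F, OF herm invol F1 F2]
    by (intro bdd_aboveI[where M = "real CARD('x) / 2"]) blast
qed

lemma lhs_model_pairing_half:
  fixes A :: "'x::finite \<Rightarrow> complex^'d^'d" and F :: "'x \<Rightarrow> nat \<Rightarrow> complex^'d^'d"
  assumes herm: "\<And>x. cadj (A x) = A x" and invol: "\<And>x. A x ** A x = mat 1"
    and F1: "\<And>x. F x 1 = (1/2::real) *\<^sub>R A x"
    and F2: "\<And>x. F x 2 = - ((1/2::real) *\<^sub>R A x)"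
  obtains \<sigma> where "lhs_model \<sigma>" "cmod (pairing F \<sigma>) = 1/2"
proof -
  obtain x0 :: 'x where True
    by simp
  obtain \<rho> where dens: "density \<rho>" and unit: "cmod (trace (A x0 ** \<rho>)) = 1"
    using density_with_unit_expectation[OF herm invol] by blast
  define p :: "'x \<Rightarrow> nat \<Rightarrow> real"
    where "p x a = (if x = x0 then (if a = 1 then 1 else 0) else 1/2)" for x a
  have "p x 1 *\<^sub>R \<rho> - p x 2 *\<^sub>R \<rho> = (if x = x0 then \<rho> else 0)" for x
    by (simp add: p_def)
  then have "pairing F (\<lambda>x a. p x a *\<^sub>R \<rho>)
      = (\<Sum>x\<in>UNIV. (1/2::real) *\<^sub>R trace (A x ** (if x = x0 then \<rho> else 0)))"
    unfolding pairing_eq_sum_trace_diff[OF F1 F2] by (simp only:)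
  also have "\<dots> = (1/2::real) *\<^sub>R trace (A x0 ** \<rho>)"
    by (simp add: if_distrib cong: if_cong)
  finally have "cmod (pairing F (\<lambda>x a. p x a *\<^sub>R \<rho>)) = 1/2"
    using unit by simp
  moreover have "lhs_model (\<lambda>x a. p x a *\<^sub>R \<rho>)"
    by (rule lhs_model_single_state[OF dens]) (simp add: p_def)
  ultimately show ?thesis
    using that by blast
qed

lemma S_LHS_bounds:
  fixes A :: "'x::finite \<Rightarrow> complex^'d^'d" and F :: "'x \<Rightarrow> nat \<Rightarrow> complex^'d^'d"
  assumes herm: "\<And>x. cadj (A x) = A x"
    and anticomm: "\<And>x y. A x ** A y + A y ** A x = (if x = y then mat 2 else mat 0)"
    and F1: "\<And>x. F x 1 = (1/2::real) *\<^sub>R A x"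
    and F2: "\<And>x. F x 2 = - ((1/2::real) *\<^sub>R A x)"
  shows "1/2 \<le> S_LHS F" "S_LHS F \<le> sqrt (real CARD('x)) / 2"
proof -
  let ?L = "{cmod (pairing F \<sigma>) |\<sigma>. lhs_model \<sigma>}"
  have bound: "y \<le> sqrt (real CARD('x)) / 2" if "y \<in> ?L" for y
    using that cmod_pairing_lhs_model_le[OF herm anticomm F1 F2] by blast
  obtain \<sigma> where "lhs_model \<sigma>" "cmod (pairing F \<sigma>) = 1/2"
    using lhs_model_pairing_half[OF herm anticommuting_involution[OF anticomm] F1 F2] .
  then have half: "1/2 \<in> ?L"
    by force
  have "bdd_above ?L"
    using bound by (rule bdd_aboveI)
  then show "1/2 \<le> S_LHS F"
    unfolding S_LHS_def using half by (rule cSup_upper[rotated])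
  show "S_LHS F \<le> sqrt (real CARD('x)) / 2"
    unfolding S_LHS_def using half bound by (intro cSup_least) auto
qed

theorem theorem2:
  fixes A :: "'x::finite \<Rightarrow> complex^'d^'d"
    and F :: "'x \<Rightarrow> nat \<Rightarrow> complex^'d^'d"
  assumes dim: "CARD('d) = 2 ^ CARD('x)"
    and herm: "\<And>x. cadj (A x) = A x"
    and anticomm: "\<And>x y. A x ** A y + A y ** A x = (if x = y then mat 2 else mat 0)"
    and F1: "\<And>x. F x 1 = (1/2::real) *\<^sub>R A x"
    and F2: "\<And>x. F x 2 = - ((1/2::real) *\<^sub>R A x)"
  shows "violation F \<ge> sqrt (real CARD('x) / 2)"
proof -
  let ?n = "real CARD('x)"
  have S_Q: "?n / 2 \<le> S_Q F"
    using S_Q_ge[OF herm anticommuting_involution[OF anticomm] F1 F2] .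
  note S_LHS = S_LHS_bounds[OF herm anticomm F1 F2]
  have "sqrt (?n / 2) \<le> sqrt ?n"
    by simp
  also have "\<dots> = (?n / 2) / (sqrt ?n / 2)"
    using real_div_sqrt[of ?n] by simp
  also have "\<dots> \<le> S_Q F / S_LHS F"
    using S_Q S_LHS by (intro frac_le) auto
  finally show ?thesis
    unfolding violation_def .
qed

end
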